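(* Let $\beta<0$, $G_\beta(u)=-u^\beta$, $L\in\mathbb{N}$, $d>0$ and $u_0\in\mathcal{P}_{L,d}$. For $\delta>0$ let $u_{0,\delta}=u_0\vee\delta$ and let $u_\delta$ be a solution of $\partial_tu=\Delta G_\beta(u)$, $u(0)=u_{0,\delta}$, satisfying $\delta\le u_\delta\le\|u_{0,\delta}\|_\infty$. Then there exist $c=c(\beta,L,d)>0$ and $t^*=t^*(\beta,L,d)>0$ such that $u_\delta(t,k)\ge c\,t^{\frac1{1-\beta}}$ for all $0\le t\le t^*$ and $k\in\mathbb{Z}$.
   Context: $\Delta v(k)=v(k-1)-2v(k)+v(k+1)$. For $u\in\ell^\infty_+(\mathbb{Z})$, $\sigma_+(u,k,d)=\inf\{l>k:u(l)\ge d\}$ and $\mathcal{P}_{L,d}=\{u\in\ell^\infty_+(\mathbb{Z}):\sup_k(\sigma_+(u,k,d)-k)\le L\}$. A solution: $u\in C^0([0,\infty);\ell^\infty_+(\mathbb{Z}))$ with the given initial datum, each $u(\cdot,k)\in C^1((0,\infty);(0,\infty))$ satisfying the equation pointwise. (Such $u_\delta$ exist.) *)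

theory Defs
  imports "HOL-Analysis.Analysis"
begin

definition linf_plus :: "(int \<Rightarrow> real) set" where
  "linf_plus = {u. bounded (range u) \<and> (\<forall>k. 0 \<le> u k)}"

definition supnorm :: "(int \<Rightarrow> real) \<Rightarrow> real" where
  "supnorm u = (SUP k. \<bar>u k\<bar>)"

text \<open>sigma_+(u,k,d) = inf {l > k. u l >= d}, with inf of the empty set = +infinity\<close>
definition sigma_plus :: "(int \<Rightarrow> real) \<Rightarrow> int \<Rightarrow> real \<Rightarrow> ereal" where
  "sigma_plus u k d = Inf {ereal (real_of_int l) | l. l > k \<and> u l \<ge> d}"

definition P_set :: "nat \<Rightarrow> real \<Rightarrow> (int \<Rightarrow> real) set" where
  "P_set L d = {u \<in> linf_plus.
     (SUP k. sigma_plus u k d - ereal (real_of_int k)) \<le> ereal (real L)}"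

definition G_beta :: "real \<Rightarrow> real \<Rightarrow> real" where
  "G_beta \<beta> v = - (v powr \<beta>)"

definition dlap :: "(int \<Rightarrow> real) \<Rightarrow> int \<Rightarrow> real" where
  "dlap v k = v (k - 1) - 2 * v k + v (k + 1)"

definition is_solution :: "real \<Rightarrow> (int \<Rightarrow> real) \<Rightarrow> (real \<Rightarrow> int \<Rightarrow> real) \<Rightarrow> bool" where
  "is_solution \<beta> w u \<longleftrightarrow>
     (\<forall>t\<ge>0. u t \<in> linf_plus)
   \<and> (\<forall>t\<ge>0. \<forall>\<epsilon>>0. \<exists>\<eta>>0. \<forall>s\<ge>0. \<bar>s - t\<bar> < \<eta> \<longrightarrow> supnorm (\<lambda>k. u s k - u t k) < \<epsilon>)
   \<and> u 0 = w
   \<and> (\<forall>k. \<forall>t>0. u t k > 0)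
   \<and> (\<forall>k. \<forall>t>0. ((\<lambda>s. u s k) has_real_derivative dlap (\<lambda>j. G_beta \<beta> (u t j)) k) (at t))
   \<and> (\<forall>k. continuous_on {0<..} (\<lambda>t. deriv (\<lambda>s. u s k) t))"

end

theory Submission
  imports Defs
begin

text \<open>Comparison with a self-similar subsolution.  Call \<open>j\<close> a site if \<open>u0 j \<ge> d\<close>; every
  point has a site at most \<open>L\<close> steps to its right.  Between consecutive sites \<open>a < b\<close> put
  \<open>q j = 1/2 + \<eta> (j - a) (b - j)\<close>, so that \<open>1/2 \<le> q \<le> 1\<close> and \<open>-\<Delta>q \<ge> 2\<eta>\<close> off the sites.
  The barrier \<open>w t j = c t^\<alpha> (q j)^(1/\<beta>)\<close>, \<open>\<alpha> = 1/(1-\<beta>)\<close>, satisfies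
  \<open>(w t j)^\<beta> = c^\<beta> t^(\<alpha>-1) q j\<close>, hence \<open>\<Delta>G\<^sub>\<beta>(w) = c^\<beta> t^(\<alpha>-1) (-\<Delta>q)\<close>, while
  \<open>\<partial>\<^sub>t w \<le> c \<alpha> 2^(-1/\<beta>) t^(\<alpha>-1)\<close>; choosing \<open>c\<close> with \<open>c \<alpha> 2^(-1/\<beta>) \<le> \<eta> c^\<beta>\<close> makes \<open>w\<close> a
  strict subsolution off the sites.  At a site \<open>u\<close> starts at least at \<open>d\<close>, and as long as
  \<open>u \<ge> c t^\<alpha> / 2\<close> its outflow is at most \<open>2 (c/2)^\<beta> t^(\<alpha>-1)\<close>, which is integrable at \<open>0\<close>;
  so up to a time \<open>t\<^sub>s\<close> independent of \<open>\<delta>\<close> it stays above \<open>d/2\<close> there, while \<open>w \<le> d/4\<close>.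
  Since \<open>u \<ge> \<delta>\<close> lies above \<open>w\<close> for short times, at a first crossing of \<open>u\<close> and \<open>w\<close> both
  kinds of sites lead to a contradiction.\<close>

section \<open>Lipschitz bounds and approximate first crossings\<close>

lemma nonpos_powr_le_add_of_ge_sub:
  fixes \<beta> m e x y :: real
  assumes "\<beta> \<le> 0" "0 < m" "m \<le> x" "m \<le> y" "y - e \<le> x" "0 \<le> e"
  shows "x powr \<beta> \<le> y powr \<beta> + (-\<beta>) * m powr (\<beta> - 1) * e"
proof (cases "y \<le> x")
  case True
  then have "x powr \<beta> \<le> y powr \<beta>" using assms by (intro powr_mono2') auto
  moreover have "0 \<le> (-\<beta>) * m powr (\<beta> - 1) * e" using assms by (intro mult_nonneg_nonneg) auto
  ultimately show ?thesis by linarith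
next
  case False
  have "\<And>z. x \<le> z \<Longrightarrow> z \<le> y \<Longrightarrow> ((\<lambda>z. z powr \<beta>) has_real_derivative \<beta> * z powr (\<beta> - 1)) (at z)"
    using assms by (intro has_real_derivative_powr) auto
  from MVT2[OF _ this] False obtain z where z: "x < z" "z < y"
    "y powr \<beta> - x powr \<beta> = (y - x) * (\<beta> * z powr (\<beta> - 1))" by (auto simp: not_le)
  have "z powr (\<beta> - 1) \<le> m powr (\<beta> - 1)" using assms z by (intro powr_mono2') auto
  then have "(-\<beta>) * z powr (\<beta> - 1) \<le> (-\<beta>) * m powr (\<beta> - 1)"
    by (rule mult_left_mono) (use assms in auto)
  moreover have "y - x \<le> e" "0 \<le> e" using assms by auto
  moreover have "0 \<le> (-\<beta>) * z powr (\<beta> - 1)" using assms by (intro mult_nonneg_nonneg) auto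
  ultimately have "(y - x) * ((-\<beta>) * z powr (\<beta> - 1)) \<le> e * ((-\<beta>) * m powr (\<beta> - 1))"
    by (meson mult_mono)
  then show ?thesis using z(3) by (simp add: algebra_simps)
qed

lemma abs_diff_le_of_deriv_bound:
  fixes f f' :: "real \<Rightarrow> real"
  assumes "a \<le> b"
    and "\<And>z. a \<le> z \<Longrightarrow> z \<le> b \<Longrightarrow> (f has_real_derivative f' z) (at z)"
    and "\<And>z. a \<le> z \<Longrightarrow> z \<le> b \<Longrightarrow> \<bar>f' z\<bar> \<le> \<Lambda>"
  shows "\<bar>f b - f a\<bar> \<le> \<Lambda> * (b - a)"
  using field_differentiable_bound[of "{a..b}" f f' \<Lambda> b a] assms
  by (auto intro: has_field_derivative_at_within)

text \<open>The family need not have a first crossing time (there are infinitely many indices), so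
  we only find a time \<open>\<sigma>\<close> at which one member is decreasing and near zero while all
  members have stayed above \<open>-e\<close>.\<close>
lemma near_first_crossing:
  fixes g g' :: "'i \<Rightarrow> real \<Rightarrow> real"
  assumes "0 < e" "0 < \<Lambda>" "s0 \<le> t" and start: "\<And>i. 0 \<le> g i s0"
    and deriv: "\<And>i s. s0 \<le> s \<Longrightarrow> s \<le> t \<Longrightarrow> (g i has_real_derivative g' i s) (at s)"
    and bound: "\<And>i s. s0 \<le> s \<Longrightarrow> s \<le> t \<Longrightarrow> \<bar>g' i s\<bar> \<le> \<Lambda>"
    and crossing: "g k t < 0"
  obtains \<sigma> j where "s0 < \<sigma>" "\<sigma> \<le> t" "g' j \<sigma> < 0" "g j \<sigma> \<le> e"
    "\<And>i \<tau>. s0 \<le> \<tau> \<Longrightarrow> \<tau> \<le> \<sigma> \<Longrightarrow> -e \<le> g i \<tau>"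
proof -
  define Z where "Z = {s. s0 \<le> s \<and> s \<le> t \<and> (\<exists>i. g i s < 0)}"
  define T where "T = Inf Z"
  have "t \<in> Z" "bdd_below Z" using assms(3) crossing unfolding Z_def by (auto intro: bdd_belowI)
  then have "Z \<noteq> {}" "T \<le> t" unfolding T_def by (auto intro: cInf_lower)
  have Z_after_start: "s0 < s" if s: "s \<in> Z" for s
  proof -
    obtain i where "s0 \<le> s" "g i s < 0" using s unfolding Z_def by auto
    with start[of i] show ?thesis by (cases "s = s0") auto
  qed
  have before_T: "0 \<le> g i s" if "s0 \<le> s" "s < T" for i s
  proof (rule ccontr)
    assume "\<not> 0 \<le> g i s"
    then have "s \<in> Z" using that \<open>T \<le> t\<close> unfolding Z_def by (auto simp: not_le)
    then have "T \<le> s" unfolding T_def using \<open>bdd_below Z\<close> by (rule cInf_lower)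
    with that show False by simp
  qed
  define \<epsilon> where "\<epsilon> = e / (2 * \<Lambda>)"
  have "0 < \<epsilon>" "\<Lambda> * (2 * \<epsilon>) = e" using assms(1,2) unfolding \<epsilon>_def by auto
  then obtain s where "s \<in> Z" "s < T + \<epsilon>"
    using cInf_less_iff[OF \<open>Z \<noteq> {}\<close> \<open>bdd_below Z\<close>, of "T + \<epsilon>"] unfolding T_def by auto
  then obtain j where "g j s < 0" "s0 < s" "s \<le> t" "T \<le> s"
    using Z_after_start cInf_lower[OF _ \<open>bdd_below Z\<close>] unfolding Z_def T_def by auto
  define a where "a = max s0 (T - \<epsilon>)"
  have "a < s" "s - a < 2 * \<epsilon>" "s0 \<le> a" using \<open>0 < \<epsilon>\<close> \<open>s0 < s\<close> \<open>T \<le> s\<close> \<open>s < T + \<epsilon>\<close>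
    unfolding a_def by auto
  have nonneg_until_a: "0 \<le> g i \<tau>" if "s0 \<le> \<tau>" "\<tau> \<le> a" for i \<tau>
    using that start before_T \<open>0 < \<epsilon>\<close> unfolding a_def by (cases "\<tau> = s0") auto
  have Lip: "\<bar>g i \<tau>2 - g i \<tau>1\<bar> \<le> \<Lambda> * (\<tau>2 - \<tau>1)" if "a \<le> \<tau>1" "\<tau>1 \<le> \<tau>2" "\<tau>2 \<le> s" for i \<tau>1 \<tau>2
    using that \<open>s0 \<le> a\<close> \<open>s \<le> t\<close> by (intro abs_diff_le_of_deriv_bound[where f' = "g' i"] deriv bound) auto
  obtain \<sigma> where \<sigma>: "a < \<sigma>" "\<sigma> < s" "g j s - g j a = (s - a) * g' j \<sigma>"
    using MVT2[OF \<open>a < s\<close>, of "g j" "g' j"] deriv \<open>s0 \<le> a\<close> \<open>s \<le> t\<close> by auto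
  show thesis
  proof
    show "s0 < \<sigma>" "\<sigma> \<le> t" using \<sigma> \<open>s0 \<le> a\<close> \<open>s \<le> t\<close> by auto
    have "0 \<le> g j a" using nonneg_until_a \<open>s0 \<le> a\<close> by simp
    then have "(s - a) * g' j \<sigma> < 0" using \<sigma>(3) \<open>g j s < 0\<close> by linarith
    then show "g' j \<sigma> < 0" using \<open>a < s\<close> by (simp add: mult_less_0_iff)
    have "\<Lambda> * (s - \<sigma>) \<le> \<Lambda> * (2 * \<epsilon>)" using \<sigma> \<open>s - a < 2 * \<epsilon>\<close> \<open>0 < \<Lambda>\<close>
      by (intro mult_left_mono) auto
    then show "g j \<sigma> \<le> e" using Lip[of \<sigma> s j] \<sigma> \<open>g j s < 0\<close> \<open>\<Lambda> * (2 * \<epsilon>) = e\<close> by auto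
    show "-e \<le> g i \<tau>" if "s0 \<le> \<tau>" "\<tau> \<le> \<sigma>" for i \<tau>
    proof (cases "\<tau> \<le> a")
      case True then show ?thesis using nonneg_until_a[of \<tau> i] that \<open>0 < e\<close> by simp
    next
      case False
      have "\<Lambda> * (\<tau> - a) \<le> \<Lambda> * (2 * \<epsilon>)" using that \<sigma> \<open>s - a < 2 * \<epsilon>\<close> \<open>0 < \<Lambda>\<close>
        by (intro mult_left_mono) auto
      then show ?thesis
        using Lip[of a \<tau> i] nonneg_until_a[of a i] \<open>s0 \<le> a\<close> that \<sigma> False \<open>\<Lambda> * (2 * \<epsilon>) = e\<close>
        by auto
    qed
  qed
qed

section \<open>Sites of the initial datum and a concave profile\<close>

lemma P_set_site_ahead:
  assumes "u0 \<in> P_set L d"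
  shows "\<exists>l. k < l \<and> l \<le> k + int L \<and> d \<le> u0 l"
proof (rule ccontr)
  assume no_site: "\<not> ?thesis"
  have "ereal (real_of_int (k + int L + 1)) \<le> sigma_plus u0 k d"
    unfolding sigma_plus_def
  proof (rule Inf_greatest, clarify)
    fix l assume "k < l" "d \<le> u0 l"
    with no_site have "\<not> l \<le> k + int L" by blast
    then show "ereal (real_of_int (k + int L + 1)) \<le> ereal (real_of_int l)" by simp
  qed
  then have "ereal (real_of_int (k + int L + 1)) - ereal (real_of_int k)
      \<le> sigma_plus u0 k d - ereal (real_of_int k)"
    by (intro ereal_minus_mono) auto
  also have "\<dots> \<le> (SUP k. sigma_plus u0 k d - ereal (real_of_int k))"
    by (rule SUP_upper) simp
  also have "\<dots> \<le> ereal (real L)"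
    using assms by (simp add: P_set_def)
  finally show False by simp
qed

locale site_spacing =
  fixes P :: "int \<Rightarrow> bool" and L :: nat
  assumes site_ahead: "\<And>k. \<exists>l. k < l \<and> l \<le> k + int L \<and> P l"
begin

definition prev_site :: "int \<Rightarrow> int" where
  "prev_site j = Max {l. P l \<and> j - int L < l \<and> l \<le> j}"

definition next_site :: "int \<Rightarrow> int" where
  "next_site j = Min {l. P l \<and> j \<le> l \<and> l < j + int L}"

lemma prev_site: "P (prev_site j)" "prev_site j \<le> j" "j - int L < prev_site j"
proof -
  have "finite {l. P l \<and> j - int L < l \<and> l \<le> j}"
    by (rule finite_subset[of _ "{j - int L<..j}"]) auto
  moreover have "{l. P l \<and> j - int L < l \<and> l \<le> j} \<noteq> {}"
    using site_ahead[of "j - int L"] by auto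
  ultimately have "prev_site j \<in> {l. P l \<and> j - int L < l \<and> l \<le> j}"
    unfolding prev_site_def by (rule Max_in)
  then show "P (prev_site j)" "prev_site j \<le> j" "j - int L < prev_site j" by auto
qed

lemma prev_site_greatest: "P l \<Longrightarrow> l \<le> j \<Longrightarrow> l \<le> prev_site j"
  using prev_site[of j] unfolding prev_site_def
  by (cases "j - int L < l") (auto intro!: Max_ge finite_subset[of _ "{j - int L<..j}"])

lemma next_site: "P (next_site j)" "j \<le> next_site j" "next_site j < j + int L"
proof -
  have "finite {l. P l \<and> j \<le> l \<and> l < j + int L}"
    by (rule finite_subset[of _ "{j..<j + int L}"]) auto
  moreover have "{l. P l \<and> j \<le> l \<and> l < j + int L} \<noteq> {}"
    using site_ahead[of "j - 1"] by fastforce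
  ultimately have "next_site j \<in> {l. P l \<and> j \<le> l \<and> l < j + int L}"
    unfolding next_site_def by (rule Min_in)
  then show "P (next_site j)" "j \<le> next_site j" "next_site j < j + int L" by auto
qed

lemma next_site_least: "P l \<Longrightarrow> j \<le> l \<Longrightarrow> next_site j \<le> l"
  using next_site[of j] unfolding next_site_def
  by (cases "l < j + int L") (auto intro!: Min_le finite_subset[of _ "{j..<j + int L}"])

definition gap_product :: "int \<Rightarrow> int" where
  "gap_product j = (j - prev_site j) * (next_site j - j)"

lemma gap_product_bounds: "0 \<le> gap_product j" "gap_product j \<le> int L * int L"
  using prev_site[of j] next_site[of j] unfolding gap_product_def
  by (auto intro: mult_mono)

lemma gap_product_le:
  assumes "P a" "P b" "a \<le> j" "j \<le> b"
  shows "gap_product j \<le> (j - a) * (b - j)"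
  using prev_site[of j] next_site[of j] prev_site_greatest[OF assms(1,3)]
    next_site_least[OF assms(2,4)]
  unfolding gap_product_def by (intro mult_mono) auto

text \<open>Between two consecutive sites the gap product is the parabola \<open>(j - a) (b - j)\<close>,
  whose second difference is \<open>-2\<close>; at a neighbour of \<open>j\<close> it can only be smaller.\<close>
lemma gap_product_concave:
  assumes "\<not> P j"
  shows "2 \<le> 2 * gap_product j - gap_product (j - 1) - gap_product (j + 1)"
proof -
  define a b where "a = prev_site j" and "b = next_site j"
  have "a < j" "j < b"
    using assms prev_site[of j] next_site[of j] unfolding a_def b_def
    by (metis order.not_eq_order_implies_strict)+
  then have "gap_product (j - 1) \<le> (j - 1 - a) * (b - (j - 1))"
    and "gap_product (j + 1) \<le> (j + 1 - a) * (b - (j + 1))"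
    using prev_site[of j] next_site[of j] unfolding a_def b_def
    by (auto intro!: gap_product_le)
  moreover have "gap_product j = (j - a) * (b - j)"
    unfolding gap_product_def a_def b_def ..
  ultimately show ?thesis by (simp add: algebra_simps)
qed

definition profile :: "int \<Rightarrow> real" where
  "profile j = 1/2 + gap_product j / (2 * (real L + 1)^2)"

lemma profile_bounds: "1/2 \<le> profile j" "profile j \<le> 1"
proof -
  have "real_of_int (gap_product j) \<le> real L * real L"
    using gap_product_bounds(2)[of j] by (metis of_int_le_iff of_int_mult of_int_of_nat_eq)
  also have "\<dots> \<le> (real L + 1)^2"
    by (simp add: power2_eq_square mult_mono)
  finally show "1/2 \<le> profile j" "profile j \<le> 1"
    using gap_product_bounds(1)[of j] unfolding profile_def by (auto simp: field_simps)
qed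

lemma profile_concave:
  assumes "\<not> P j"
  shows "1 / (real L + 1)^2 \<le> 2 * profile j - profile (j - 1) - profile (j + 1)"
proof -
  have "2 \<le> real_of_int (2 * gap_product j - gap_product (j - 1) - gap_product (j + 1))"
    using gap_product_concave[OF assms] by linarith
  then have "2 / (2 * (real L + 1)^2)
      \<le> real_of_int (2 * gap_product j - gap_product (j - 1) - gap_product (j + 1))
        / (2 * (real L + 1)^2)"
    by (intro divide_right_mono) auto
  then show ?thesis
    unfolding profile_def by (simp add: diff_divide_distrib add_divide_distrib)
qed

end

section \<open>Lower bounds for solutions\<close>

lemma abs_le_supnorm:
  assumes "bounded (range v)"
  shows "\<bar>v k\<bar> \<le> supnorm v"
  unfolding supnorm_def
  using assms by (intro cSUP_upper) (auto simp: bounded_iff bdd_above_def)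

lemma dlap_G_beta:
  "dlap (\<lambda>i. G_beta \<beta> (v i)) j = 2 * v j powr \<beta> - v (j - 1) powr \<beta> - v (j + 1) powr \<beta>"
  by (simp add: dlap_def G_beta_def)

lemma solution_has_derivative:
  assumes "is_solution \<beta> w0 u" "0 < t"
  shows "((\<lambda>s. u s k) has_real_derivative
           2 * u t k powr \<beta> - u t (k - 1) powr \<beta> - u t (k + 1) powr \<beta>) (at t)"
  using assms unfolding is_solution_def dlap_G_beta by blast

lemma solution_near_initial:
  assumes "is_solution \<beta> w0 u" "0 < \<epsilon>"
  obtains \<tau> where "0 < \<tau>" "\<And>s. 0 \<le> s \<Longrightarrow> s < \<tau> \<Longrightarrow> w0 k - \<epsilon> < u s k"
proof -
  have "\<exists>\<tau>>0. \<forall>s\<ge>0. \<bar>s - 0\<bar> < \<tau> \<longrightarrow> supnorm (\<lambda>k. u s k - u 0 k) < \<epsilon>"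
    using assms unfolding is_solution_def by (meson order_refl)
  then obtain \<tau> where "0 < \<tau>" and close: "\<And>s. 0 \<le> s \<Longrightarrow> s < \<tau> \<Longrightarrow> supnorm (\<lambda>k. u s k - u 0 k) < \<epsilon>"
    by auto
  have "w0 k - \<epsilon> < u s k" if "0 \<le> s" "s < \<tau>" for s
  proof -
    have "bounded (range (u s))" "bounded (range (u 0))" "u 0 = w0"
      using assms(1) that unfolding is_solution_def linf_plus_def by auto
    then have "\<bar>u s k - w0 k\<bar> \<le> supnorm (\<lambda>k. u s k - u 0 k)"
      using abs_le_supnorm[of "\<lambda>k. u s k - u 0 k"] by (auto intro: bounded_minus_comp)
    with close[OF that] show ?thesis by linarith
  qed
  with \<open>0 < \<tau>\<close> show thesis by (rule that)
qed

lemma flux_lower_bound: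
  fixes v :: "int \<Rightarrow> real"
  assumes "\<beta> \<le> 0" "0 < m" "\<And>i. m \<le> v i"
  shows "- 2 * m powr \<beta> \<le> 2 * v j powr \<beta> - v (j - 1) powr \<beta> - v (j + 1) powr \<beta>"
proof -
  have le: "v i powr \<beta> \<le> m powr \<beta>" for i using assms by (intro powr_mono2') auto
  have "0 \<le> v j powr \<beta>" by simp
  with le[of "j - 1"] le[of "j + 1"] show ?thesis by linarith
qed

lemma solution_initial_le_of_nondecreasing:
  assumes "is_solution \<beta> w0 u" "0 < \<sigma>"
    and nonneg: "\<And>\<tau>. 0 < \<tau> \<Longrightarrow> \<tau> \<le> \<sigma> \<Longrightarrow> 0 \<le> \<phi> \<tau>"
    and mono: "\<And>\<tau>. 0 < \<tau> \<Longrightarrow> \<tau> \<le> \<sigma> \<Longrightarrow> u \<tau> j + \<phi> \<tau> \<le> u \<sigma> j + \<phi> \<sigma>"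
  shows "w0 j \<le> u \<sigma> j + \<phi> \<sigma>"
proof (rule field_le_epsilon)
  fix \<epsilon> :: real assume "0 < \<epsilon>"
  obtain \<tau>0 where "0 < \<tau>0" and near: "\<And>s. 0 \<le> s \<Longrightarrow> s < \<tau>0 \<Longrightarrow> w0 j - \<epsilon> < u s j"
    using solution_near_initial[OF assms(1) \<open>0 < \<epsilon>\<close>] by blast
  define \<tau> where "\<tau> = min \<sigma> (\<tau>0 / 2)"
  have "0 < \<tau>" "\<tau> \<le> \<sigma>" "\<tau> < \<tau>0" using \<open>0 < \<tau>0\<close> assms(2) unfolding \<tau>_def by auto
  then show "w0 j \<le> u \<sigma> j + \<phi> \<sigma> + \<epsilon>"
    using near[of \<tau>] nonneg[of \<tau>] mono[of \<tau>] by simp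
qed

lemma solution_lower_bound_from_initial:
  fixes \<beta> b \<sigma> :: real
  assumes "\<beta> < 0" "is_solution \<beta> w0 u" "0 < b" "0 < \<sigma>"
    and lower: "\<And>\<tau> i. 0 < \<tau> \<Longrightarrow> \<tau> \<le> \<sigma> \<Longrightarrow> b * \<tau> powr (1 / (1 - \<beta>)) \<le> u \<tau> i"
  shows "w0 j - 2 * (1 - \<beta>) * b powr \<beta> * \<sigma> powr (1 / (1 - \<beta>)) \<le> u \<sigma> j"
proof -
  define \<alpha> where "\<alpha> = 1 / (1 - \<beta>)"
  have \<alpha>: "\<alpha> * \<beta> = \<alpha> - 1" "(1 - \<beta>) * \<alpha> = 1"
    using assms(1) unfolding \<alpha>_def by (auto simp: field_simps)
  define C where "C = 2 * (1 - \<beta>) * b powr \<beta>"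
  have "C * (\<alpha> * \<tau> powr (\<alpha> - 1)) = 2 * (b * \<tau> powr \<alpha>) powr \<beta> * ((1 - \<beta>) * \<alpha>)" if "0 < \<tau>" for \<tau>
    using assms(3) that unfolding C_def by (simp add: powr_mult powr_powr \<alpha>(1) ac_simps)
  then have C_speed: "C * (\<alpha> * \<tau> powr (\<alpha> - 1)) = 2 * (b * \<tau> powr \<alpha>) powr \<beta>" if "0 < \<tau>" for \<tau>
    using that unfolding \<alpha>(2) by simp
  \<comment> \<open>while \<open>u \<ge> b t^\<alpha>\<close>, the outflow \<open>2 (b t^\<alpha>)^\<beta>\<close> is compensated by the growth of \<open>C t^\<alpha>\<close>\<close>
  have "u \<tau> j + C * \<tau> powr \<alpha> \<le> u \<sigma> j + C * \<sigma> powr \<alpha>" if "0 < \<tau>" "\<tau> \<le> \<sigma>" for \<tau>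
  proof (rule DERIV_nonneg_imp_nondecreasing[OF that(2)])
    fix x assume "\<tau> \<le> x" "x \<le> \<sigma>"
    with that have "0 < x" by simp
    have "- 2 * (b * x powr \<alpha>) powr \<beta>
        \<le> 2 * u x j powr \<beta> - u x (j - 1) powr \<beta> - u x (j + 1) powr \<beta>"
      using lower \<open>0 < x\<close> \<open>x \<le> \<sigma>\<close> assms(1,3) unfolding \<alpha>_def by (intro flux_lower_bound) auto
    moreover have "((\<lambda>s. u s j + C * s powr \<alpha>) has_real_derivative
        (2 * u x j powr \<beta> - u x (j - 1) powr \<beta> - u x (j + 1) powr \<beta>) + C * (\<alpha> * x powr (\<alpha> - 1))) (at x)"
      using \<open>0 < x\<close>
      by (intro DERIV_add DERIV_cmult solution_has_derivative[OF assms(2)] has_real_derivative_powr)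
    ultimately show "\<exists>y. ((\<lambda>s. u s j + C * s powr \<alpha>) has_real_derivative y) (at x) \<and> 0 \<le> y"
      using C_speed[OF \<open>0 < x\<close>] by force
  qed
  moreover have "0 \<le> C * \<tau> powr \<alpha>" for \<tau> using assms(1,3) unfolding C_def by simp
  ultimately have "w0 j \<le> u \<sigma> j + C * \<sigma> powr \<alpha>"
    by (intro solution_initial_le_of_nondecreasing[OF assms(2,4)])
  then show ?thesis unfolding C_def \<alpha>_def by simp
qed

section \<open>The self-similar barrier\<close>

locale barrier_constants =
  fixes \<beta> \<alpha> d \<eta> c t\<^sub>s :: real
  assumes beta_neg: "\<beta> < 0" and alpha_eq: "\<alpha> = 1 / (1 - \<beta>)"
    and d_pos: "0 < d" and eta_pos: "0 < \<eta>" and c_pos: "0 < c" and ts_pos: "0 < t\<^sub>s"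
    and speed_balance: "c * \<alpha> * (1/2) powr (1/\<beta>) \<le> \<eta> * c powr \<beta>"
    and barrier_small: "c * (1/2) powr (1/\<beta>) * t\<^sub>s powr \<alpha> \<le> d / 4"
    and decay_small: "2 * (1 - \<beta>) * (c/2) powr \<beta> * t\<^sub>s powr \<alpha> \<le> d / 2"
begin

lemma alpha: "0 < \<alpha>" "\<alpha> < 1" "\<alpha> * \<beta> = \<alpha> - 1"
  using beta_neg unfolding alpha_eq by (auto simp: field_simps)

lemma half_powr_ge_one: "1 \<le> (1/2) powr (1/\<beta>)"
proof -
  have "(2::real) powr (1/\<beta>) \<le> 2 powr 0"
    using beta_neg by (intro powr_mono) (auto simp: divide_neg_pos)
  then show ?thesis by (simp add: powr_divide)
qed

end

lemma barrier_constants_exist: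
  fixes \<beta> d \<eta> :: real
  assumes "\<beta> < 0" "0 < d" "0 < \<eta>"
  shows "\<exists>c t\<^sub>s. barrier_constants \<beta> (1 / (1 - \<beta>)) d \<eta> c t\<^sub>s"
proof -
  define \<alpha> F where "\<alpha> = 1 / (1 - \<beta>)" and "F = (1/2 :: real) powr (1/\<beta>)"
  have "0 < \<alpha>" "0 < F" using assms(1) unfolding \<alpha>_def F_def by auto
  \<comment> \<open>\<open>c^(\<beta>-1) = \<alpha> F / \<eta>\<close> turns \<open>speed_balance\<close> into an equality\<close>
  define c where "c = (\<alpha> * F / \<eta>) powr (1 / (\<beta> - 1))"
  have "0 < c" using \<open>0 < \<alpha>\<close> \<open>0 < F\<close> assms(3) unfolding c_def by simp
  have "c powr \<beta> = c powr (1 + (\<beta> - 1))" by simp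
  also have "\<dots> = c * c powr (\<beta> - 1)" unfolding powr_add using \<open>0 < c\<close> by simp
  also have "c powr (\<beta> - 1) = \<alpha> * F / \<eta>"
    unfolding c_def powr_powr using \<open>0 < \<alpha>\<close> \<open>0 < F\<close> assms(1,3) by simp
  finally have balance: "c * \<alpha> * F \<le> \<eta> * c powr \<beta>" using assms(3) by simp
  define A where "A = min (d / (4 * c * F)) (d / (4 * (1 - \<beta>) * (c/2) powr \<beta>))"
  have "0 < A" using assms \<open>0 < c\<close> \<open>0 < F\<close> unfolding A_def by simp
  define t\<^sub>s where "t\<^sub>s = A powr (1 / \<alpha>)"
  have "0 < t\<^sub>s" "t\<^sub>s powr \<alpha> = A"
    using \<open>0 < A\<close> \<open>0 < \<alpha>\<close> unfolding t\<^sub>s_def powr_powr by auto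
  moreover have "c * F * A \<le> d / 4" "2 * (1 - \<beta>) * (c/2) powr \<beta> * A \<le> d / 2"
    using assms(1) \<open>0 < c\<close> \<open>0 < F\<close> unfolding A_def by (auto simp: field_simps min_def)
  ultimately have "barrier_constants \<beta> \<alpha> d \<eta> c t\<^sub>s"
    using assms balance \<open>0 < c\<close> unfolding barrier_constants_def \<alpha>_def F_def by auto
  then show ?thesis unfolding \<alpha>_def by blast
qed

locale barrier_comparison = barrier_constants +
  fixes \<delta> :: real and q w0 :: "int \<Rightarrow> real" and u :: "real \<Rightarrow> int \<Rightarrow> real"
  assumes delta_pos: "0 < \<delta>"
    and q_bounds: "\<And>j. 1/2 \<le> q j \<and> q j \<le> 1"
    and q_concave: "\<And>j. w0 j < d \<Longrightarrow> 2 * \<eta> \<le> 2 * q j - q (j - 1) - q (j + 1)"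
    and solution: "is_solution \<beta> w0 u"
    and floor: "\<And>s k. 0 \<le> s \<Longrightarrow> \<delta> \<le> u s k"
begin

definition barrier :: "real \<Rightarrow> int \<Rightarrow> real" where
  "barrier s j = c * s powr \<alpha> * q j powr (1/\<beta>)"

definition barrier_speed :: "real \<Rightarrow> int \<Rightarrow> real" where
  "barrier_speed s j = c * \<alpha> * s powr (\<alpha> - 1) * q j powr (1/\<beta>)"

definition flux :: "real \<Rightarrow> int \<Rightarrow> real" where
  "flux s j = 2 * u s j powr \<beta> - u s (j - 1) powr \<beta> - u s (j + 1) powr \<beta>"

lemma q_powr_bounds: "1 \<le> q j powr (1/\<beta>)" "q j powr (1/\<beta>) \<le> (1/2) powr (1/\<beta>)"
proof -
  have "0 < q j" using q_bounds[of j] by linarith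
  then show "1 \<le> q j powr (1/\<beta>)" "q j powr (1/\<beta>) \<le> (1/2) powr (1/\<beta>)"
    using powr_mono2'[of "1/\<beta>" "q j" 1] powr_mono2'[of "1/\<beta>" "1/2" "q j"] q_bounds[of j] beta_neg
    by (auto simp: divide_neg_pos)
qed

lemma barrier_has_derivative:
  "0 < s \<Longrightarrow> ((\<lambda>s. barrier s j) has_real_derivative barrier_speed s j) (at s)"
  unfolding barrier_def barrier_speed_def
  by (auto intro!: derivative_eq_intros simp: has_real_derivative_powr)

lemma barrier_powr: "0 < s \<Longrightarrow> barrier s j powr \<beta> = c powr \<beta> * s powr (\<alpha> - 1) * q j"
  using c_pos q_bounds[of j] beta_neg
  unfolding barrier_def by (simp add: powr_mult powr_powr alpha(3))

lemma barrier_bounds: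
  assumes "0 \<le> s"
  shows "c * s powr \<alpha> \<le> barrier s j" "barrier s j \<le> c * (1/2) powr (1/\<beta>) * s powr \<alpha>"
proof -
  have "s powr \<alpha> * 1 \<le> s powr \<alpha> * q j powr (1/\<beta>)"
    by (rule mult_left_mono) (use q_powr_bounds in simp_all)
  moreover have "s powr \<alpha> * q j powr (1/\<beta>) \<le> s powr \<alpha> * (1/2) powr (1/\<beta>)"
    by (rule mult_left_mono) (use q_powr_bounds in simp_all)
  ultimately have "c * (s powr \<alpha> * 1) \<le> c * (s powr \<alpha> * q j powr (1/\<beta>))"
    "c * (s powr \<alpha> * q j powr (1/\<beta>)) \<le> c * (s powr \<alpha> * (1/2) powr (1/\<beta>))"
    using c_pos by (simp_all add: mult_left_mono)
  then show "c * s powr \<alpha> \<le> barrier s j" "barrier s j \<le> c * (1/2) powr (1/\<beta>) * s powr \<alpha>"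
    unfolding barrier_def by (simp_all add: ac_simps)
qed

lemma barrier_speed_bounds:
  assumes "0 < s"
  shows "0 \<le> barrier_speed s j" "barrier_speed s j \<le> c * \<alpha> * (1/2) powr (1/\<beta>) * s powr (\<alpha> - 1)"
  using q_powr_bounds[of j] c_pos alpha(1) assms unfolding barrier_speed_def
  by (auto intro: mult_left_mono simp: mult.commute mult.left_commute)

lemma flux_bound:
  assumes "0 \<le> s"
  shows "\<bar>flux s j\<bar> \<le> 2 * \<delta> powr \<beta>"
proof -
  from assms have "u s i powr \<beta> \<le> \<delta> powr \<beta>" for i
    using floor delta_pos beta_neg by (intro powr_mono2') auto
  moreover have "0 \<le> u s i powr \<beta>" for i by simp
  ultimately show ?thesis
    unfolding flux_def by (smt (verit))
qed

lemma barrier_below_solution_initially: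
  obtains s0 where "0 < s0" "\<And>s j. 0 \<le> s \<Longrightarrow> s \<le> s0 \<Longrightarrow> barrier s j < u s j"
proof
  define F where "F = (1/2 :: real) powr (1/\<beta>)"
  have "1 \<le> F" using half_powr_ge_one unfolding F_def .
  define s0 where "s0 = (\<delta> / (2 * c * F)) powr (1 / \<alpha>)"
  show "0 < s0" using delta_pos c_pos \<open>1 \<le> F\<close> unfolding s0_def by simp
  have s0_powr: "s0 powr \<alpha> = \<delta> / (2 * c * F)"
    using delta_pos c_pos \<open>1 \<le> F\<close> alpha(1) unfolding s0_def powr_powr by simp
  fix s j assume "0 \<le> s" "s \<le> s0"
  then have "c * F * s powr \<alpha> \<le> c * F * s0 powr \<alpha>"
    using c_pos \<open>1 \<le> F\<close> alpha(1) by (intro mult_left_mono powr_mono2) auto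
  also have "\<dots> = \<delta> / 2" using s0_powr c_pos \<open>1 \<le> F\<close> by simp
  finally show "barrier s j < u s j"
    using barrier_bounds(2)[OF \<open>0 \<le> s\<close>, of j] floor[OF \<open>0 \<le> s\<close>, of j] delta_pos
    unfolding F_def by linarith
qed

lemma gap_rate_bound:
  assumes "0 < s0" "s0 \<le> s"
  shows "\<bar>flux s j - barrier_speed s j\<bar> \<le> 2 * \<delta> powr \<beta> + c * \<alpha> * (1/2) powr (1/\<beta>) * s0 powr (\<alpha> - 1)"
proof -
  have "s powr (\<alpha> - 1) \<le> s0 powr (\<alpha> - 1)" using assms alpha(2) by (intro powr_mono2') auto
  then have "barrier_speed s j \<le> c * \<alpha> * (1/2) powr (1/\<beta>) * s0 powr (\<alpha> - 1)"
    using barrier_speed_bounds(2)[of s j] assms c_pos alpha(1) half_powr_ge_one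
    by (smt (verit) mult_left_mono mult_nonneg_nonneg)
  then show ?thesis
    using flux_bound[of s j] barrier_speed_bounds(1)[of s j] assms by (simp add: abs_le_iff)
qed

lemma crossing_at_good_site:
  assumes "0 < \<sigma>" "\<sigma> \<le> t\<^sub>s" "d \<le> w0 j"
    and lower: "\<And>\<tau> i. 0 < \<tau> \<Longrightarrow> \<tau> \<le> \<sigma> \<Longrightarrow> c / 2 * \<tau> powr \<alpha> \<le> u \<tau> i"
  shows "barrier \<sigma> j + d / 4 \<le> u \<sigma> j"
proof -
  have "\<sigma> powr \<alpha> \<le> t\<^sub>s powr \<alpha>" using assms(1,2) alpha(1) by (intro powr_mono2) auto
  have "w0 j - 2 * (1 - \<beta>) * (c / 2) powr \<beta> * \<sigma> powr \<alpha> \<le> u \<sigma> j"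
    using solution_lower_bound_from_initial[OF beta_neg solution _ assms(1)] lower c_pos
    unfolding alpha_eq by simp
  moreover have "2 * (1 - \<beta>) * (c / 2) powr \<beta> * \<sigma> powr \<alpha> \<le> d / 2"
    using \<open>\<sigma> powr \<alpha> \<le> t\<^sub>s powr \<alpha>\<close> decay_small beta_neg
    by (smt (verit) mult_left_mono mult_nonneg_nonneg powr_ge_zero)
  moreover have "barrier \<sigma> j \<le> d / 4"
    using barrier_bounds(2)[of \<sigma> j] \<open>\<sigma> powr \<alpha> \<le> t\<^sub>s powr \<alpha>\<close> barrier_small assms(1) c_pos
      half_powr_ge_one
    by (smt (verit) mult_left_mono mult_nonneg_nonneg)
  ultimately show ?thesis using assms(3) by linarith
qed

text \<open>At a site where the data lie below \<open>d\<close> the barrier is a strict subsolution with a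
  margin proportional to \<open>\<eta>\<close>; this margin survives an \<open>e\<close>-perturbation of the values.\<close>
lemma crossing_at_bad_site:
  assumes "0 < \<sigma>" "\<sigma> \<le> t" "w0 j < d" "0 < m" "0 \<le> e" "e \<le> m / 2"
    and barrier_ge: "\<And>i. m \<le> barrier \<sigma> i"
    and above: "\<And>i. barrier \<sigma> i - e \<le> u \<sigma> i" and below: "u \<sigma> j \<le> barrier \<sigma> j + e"
    and small: "4 * ((-\<beta>) * (m / 2) powr (\<beta> - 1)) * e < \<eta> * c powr \<beta> * t powr (\<alpha> - 1)"
  shows "barrier_speed \<sigma> j < flux \<sigma> j"
proof -
  define K where "K = (-\<beta>) * (m / 2) powr (\<beta> - 1)"
  define X where "X = c powr \<beta> * \<sigma> powr (\<alpha> - 1)"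
  have ge: "m / 2 \<le> u \<sigma> i" "m / 2 \<le> barrier \<sigma> i" for i
    using barrier_ge[of i] above[of i] assms(4,6) by auto
  have u_powr: "u \<sigma> i powr \<beta> \<le> barrier \<sigma> i powr \<beta> + K * e" for i
    unfolding K_def
    by (rule nonpos_powr_le_add_of_ge_sub) (use ge above assms(4,5) beta_neg in auto)
  have barrier_powr_j: "barrier \<sigma> j powr \<beta> \<le> u \<sigma> j powr \<beta> + K * e"
    unfolding K_def
    by (rule nonpos_powr_le_add_of_ge_sub) (use ge below assms(4,5) beta_neg in auto)
  have "X * (2 * q j - q (j - 1) - q (j + 1)) - 4 * (K * e) \<le> flux \<sigma> j"
    using u_powr[of "j - 1"] u_powr[of "j + 1"] barrier_powr_j assms(1)
    unfolding flux_def barrier_powr[OF assms(1)] X_def by (simp add: algebra_simps)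
  moreover have "2 * (\<eta> * X) \<le> X * (2 * q j - q (j - 1) - q (j + 1))"
    using mult_left_mono[OF q_concave[OF assms(3)], of X] c_pos unfolding X_def by (simp add: ac_simps)
  moreover have "barrier_speed \<sigma> j \<le> \<eta> * X"
    using barrier_speed_bounds(2)[OF assms(1), of j] speed_balance unfolding X_def
    by (smt (verit) mult_right_mono powr_ge_zero mult.assoc mult.commute)
  moreover have "\<eta> * c powr \<beta> * t powr (\<alpha> - 1) \<le> \<eta> * X"
    using assms(1,2) alpha(2) eta_pos c_pos unfolding X_def
    by (auto intro!: mult_left_mono powr_mono2')
  moreover have "4 * (K * e) < \<eta> * c powr \<beta> * t powr (\<alpha> - 1)"
    using small unfolding K_def by (simp add: mult.assoc)
  ultimately show ?thesis by linarith
qed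

lemma barrier_speed_lt_flux_at_crossing:
  assumes "0 < s0" "s0 < \<sigma>" "\<sigma> \<le> t" "t \<le> t\<^sub>s"
    and initially: "\<And>s i. 0 \<le> s \<Longrightarrow> s \<le> s0 \<Longrightarrow> barrier s i < u s i"
    and "0 < e" "e \<le> c * s0 powr \<alpha> / 2" "e \<le> d / 8"
    and small: "4 * ((-\<beta>) * (c * s0 powr \<alpha> / 2) powr (\<beta> - 1)) * e
      < \<eta> * c powr \<beta> * t powr (\<alpha> - 1)"
    and above: "\<And>i \<tau>. s0 \<le> \<tau> \<Longrightarrow> \<tau> \<le> \<sigma> \<Longrightarrow> barrier \<tau> i - e \<le> u \<tau> i"
    and near: "u \<sigma> j \<le> barrier \<sigma> j + e"
  shows "barrier_speed \<sigma> j < flux \<sigma> j"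
proof -
  define m where "m = c * s0 powr \<alpha>"
  have barrier_ge: "m \<le> barrier \<tau> i" if "s0 \<le> \<tau>" for \<tau> i
    using barrier_bounds(1)[of \<tau> i] that \<open>0 < s0\<close> alpha(1) c_pos unfolding m_def
    by (smt (verit) mult_left_mono powr_mono2)
  have lower: "c / 2 * \<tau> powr \<alpha> \<le> u \<tau> i" if "0 < \<tau>" "\<tau> \<le> \<sigma>" for \<tau> i
  proof (cases "\<tau> \<le> s0")
    case True
    have "0 \<le> c * \<tau> powr \<alpha>" using c_pos by simp
    then show ?thesis using initially[of \<tau> i] barrier_bounds(1)[of \<tau> i] that True by simp
  next
    case False
    then show ?thesis using above[of \<tau> i] barrier_bounds(1)[of \<tau> i] barrier_ge[of \<tau> i] that
      \<open>e \<le> c * s0 powr \<alpha> / 2\<close> unfolding m_def by auto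
  qed
  show ?thesis
  proof (cases "d \<le> w0 j")
    case True
    then have "barrier \<sigma> j + d / 4 \<le> u \<sigma> j"
      using crossing_at_good_site lower assms(1-4) by simp
    then show ?thesis using near \<open>e \<le> d / 8\<close> d_pos by linarith
  next
    case False
    have "0 < m" unfolding m_def using c_pos \<open>0 < s0\<close> by simp
    show ?thesis
    proof (rule crossing_at_bad_site[of \<sigma> t j m e])
      show "m \<le> barrier \<sigma> i" "barrier \<sigma> i - e \<le> u \<sigma> i" for i
        using barrier_ge above[of \<sigma> i] \<open>s0 < \<sigma>\<close> by auto
    qed (use False assms(1-3,6-8) small near \<open>0 < m\<close> in \<open>simp_all add: m_def\<close>)
  qed
qed

lemma barrier_le_solution:
  assumes "0 < t" "t \<le> t\<^sub>s"
  shows "barrier t k \<le> u t k"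
proof (rule ccontr)
  assume crossed: "\<not> barrier t k \<le> u t k"
  obtain s0 where "0 < s0" and initially: "\<And>s j. 0 \<le> s \<Longrightarrow> s \<le> s0 \<Longrightarrow> barrier s j < u s j"
    using barrier_below_solution_initially by blast
  have "s0 \<le> t" using initially[of t k] crossed assms(1) by (cases "t \<le> s0") auto
  define \<Lambda> where "\<Lambda> = 2 * \<delta> powr \<beta> + c * \<alpha> * (1/2) powr (1/\<beta>) * s0 powr (\<alpha> - 1)"
  define m where "m = c * s0 powr \<alpha>"
  define K where "K = (-\<beta>) * (m / 2) powr (\<beta> - 1)"
  define M where "M = \<eta> * c powr \<beta> * t powr (\<alpha> - 1)"
  define e where "e = min (m / 2) (min (d / 8) (M / (8 * (K + 1))))"
  have "0 < m" "0 < M" "0 < \<Lambda>"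
    using \<open>0 < s0\<close> c_pos eta_pos assms(1) delta_pos alpha(1) unfolding m_def M_def \<Lambda>_def
    by (auto intro!: add_pos_nonneg mult_nonneg_nonneg)
  moreover have "0 \<le> K" unfolding K_def using beta_neg by (intro mult_nonneg_nonneg) auto
  ultimately have "0 < e" using d_pos unfolding e_def by simp
  have "e \<le> m / 2" "e \<le> d / 8" unfolding e_def by (intro min.coboundedI1 min.coboundedI2 order_refl)+
  have "4 * (K * e) \<le> 4 * ((K + 1) * (M / (8 * (K + 1))))"
    using \<open>0 \<le> K\<close> \<open>0 < e\<close> unfolding e_def by (intro mult_left_mono mult_mono) auto
  also have "\<dots> = M / 2" using \<open>0 \<le> K\<close> by (simp add: field_simps add_nonneg_eq_0_iff)
  finally have "4 * K * e < M" using \<open>0 < M\<close> by simp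
  obtain \<sigma> j where "s0 < \<sigma>" "\<sigma> \<le> t" and decreasing: "flux \<sigma> j - barrier_speed \<sigma> j < 0"
    and "u \<sigma> j - barrier \<sigma> j \<le> e"
    and above: "\<And>i \<tau>. s0 \<le> \<tau> \<Longrightarrow> \<tau> \<le> \<sigma> \<Longrightarrow> -e \<le> u \<tau> i - barrier \<tau> i"
  proof (rule near_first_crossing[of e \<Lambda> s0 t "\<lambda>i s. u s i - barrier s i"
        "\<lambda>i s. flux s i - barrier_speed s i" k])
    show "((\<lambda>s. u s i - barrier s i) has_real_derivative flux s i - barrier_speed s i) (at s)"
      if "s0 \<le> s" for i s
      unfolding flux_def using that \<open>0 < s0\<close>
      by (intro DERIV_diff solution_has_derivative[OF solution] barrier_has_derivative) auto
    show "\<bar>flux s i - barrier_speed s i\<bar> \<le> \<Lambda>" if "s0 \<le> s" for i s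
      unfolding \<Lambda>_def using gap_rate_bound \<open>0 < s0\<close> that .
  qed (use \<open>0 < e\<close> \<open>0 < \<Lambda>\<close> \<open>s0 \<le> t\<close> initially[of s0] \<open>0 < s0\<close> crossed in \<open>auto simp: less_imp_le\<close>)
  have small: "4 * ((-\<beta>) * (c * s0 powr \<alpha> / 2) powr (\<beta> - 1)) * e < \<eta> * c powr \<beta> * t powr (\<alpha> - 1)"
    using \<open>4 * K * e < M\<close> unfolding K_def M_def m_def .
  have "barrier_speed \<sigma> j < flux \<sigma> j"
  proof (rule barrier_speed_lt_flux_at_crossing[OF \<open>0 < s0\<close> \<open>s0 < \<sigma>\<close> \<open>\<sigma> \<le> t\<close> assms(2)
        initially \<open>0 < e\<close> _ \<open>e \<le> d / 8\<close> small])
    show "e \<le> c * s0 powr \<alpha> / 2" using \<open>e \<le> m / 2\<close> unfolding m_def .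
    show "barrier \<tau> i - e \<le> u \<tau> i" if "s0 \<le> \<tau>" "\<tau> \<le> \<sigma>" for i \<tau> using above[OF that, of i] by simp
    show "u \<sigma> j \<le> barrier \<sigma> j + e" using \<open>u \<sigma> j - barrier \<sigma> j \<le> e\<close> by simp
  qed
  with decreasing show False by simp
qed

end

theorem lemmaA10:
  fixes \<beta> d :: real and L :: nat
  assumes "\<beta> < 0" and "d > 0"
  shows "\<exists>c t\<^sub>s. c > 0 \<and> t\<^sub>s > 0 \<and>
    (\<forall>u0 \<in> P_set L d. \<forall>\<delta>>0. \<forall>u.
       is_solution \<beta> (\<lambda>k. max (u0 k) \<delta>) u
       \<and> (\<forall>t\<ge>0. \<forall>k. \<delta> \<le> u t k \<and> u t k \<le> supnorm (\<lambda>k. max (u0 k) \<delta>))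
       \<longrightarrow> (\<forall>t. 0 \<le> t \<and> t \<le> t\<^sub>s \<longrightarrow> (\<forall>k. u t k \<ge> c * t powr (1 / (1 - \<beta>)))))"
proof -
  define \<eta> :: real where "\<eta> = 1 / (2 * (real L + 1)^2)"
  obtain c t\<^sub>s where constants: "barrier_constants \<beta> (1 / (1 - \<beta>)) d \<eta> c t\<^sub>s"
    using barrier_constants_exist[OF assms] unfolding \<eta>_def by fastforce
  interpret barrier_constants \<beta> "1 / (1 - \<beta>)" d \<eta> c t\<^sub>s by (fact constants)
  show ?thesis
  proof (intro exI conjI ballI allI impI)
    fix u0 \<delta> u t k
    assume "u0 \<in> P_set L d" "0 < \<delta>" and sol: "is_solution \<beta> (\<lambda>k. max (u0 k) \<delta>) u
       \<and> (\<forall>t\<ge>0. \<forall>k. \<delta> \<le> u t k \<and> u t k \<le> supnorm (\<lambda>k. max (u0 k) \<delta>))"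
      and t: "0 \<le> t \<and> t \<le> t\<^sub>s"
    interpret sites: site_spacing "\<lambda>l. d \<le> max (u0 l) \<delta>" L
      using P_set_site_ahead[OF \<open>u0 \<in> P_set L d\<close>] by unfold_locales force
    have "2 * \<eta> \<le> 2 * sites.profile j - sites.profile (j - 1) - sites.profile (j + 1)"
      if "max (u0 j) \<delta> < d" for j
      using sites.profile_concave[of j] that unfolding \<eta>_def by simp
    then interpret barrier_comparison \<beta> "1 / (1 - \<beta>)" d \<eta> c t\<^sub>s \<delta> sites.profile "\<lambda>k. max (u0 k) \<delta>" u
      using \<open>0 < \<delta>\<close> sites.profile_bounds sol
      by (intro barrier_comparison.intro[OF constants] barrier_comparison_axioms.intro) auto
    show "c * t powr (1 / (1 - \<beta>)) \<le> u t k"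
    proof (cases "t = 0")
      case True
      then show ?thesis using floor[of t k] \<open>0 < \<delta>\<close> by simp
    next
      case False
      then show ?thesis using barrier_le_solution[of t k] barrier_bounds(1)[of t k] t by simp
    qed
  qed (use c_pos ts_pos in auto)
qed

end
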